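(* There exist a complex vector field $B=(B_1,B_2)$ on $\mathbb{T}^2\times\mathbb{R}^+$ with values in $\mathbb{C}^2$, continuous and uniformly bounded, and a non-zero, uniformly $C^2$, complex-valued function $u$ on $\mathbb{T}^2\times\mathbb{R}^+$ such that $$\dot u=\Delta u+B\cdot\nabla u=\partial_x^2u+\partial_y^2u+B_1\partial_xu+B_2\partial_yu\quad\text{in }\mathbb{T}^2\times\mathbb{R}^+,$$ and $u$ has double exponential decay: there is a numerical constant $c>0$ such that for all sufficiently large $T$, $$\sup_{\mathbb{T}^2\times\{t\ge T\}}|u(x,y,t)|\le e^{-ce^{cT}}.$$
   Context: $\mathbb{T}^2=(\mathbb{R}/2\pi\mathbb{Z})^2$ with coordinates $(x,y)$; $t\ge0$ is the third coordinate. $\dot u=\partial_tu$; $\Delta$ and $\nabla$ involve only the spatial variables $(x,y)$. Uniformly $C^2$ means all partial derivatives in $(x,y,t)$ of order at most $2$ are continuous and bounded. *)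

theory Defs
  imports "HOL-Analysis.Analysis"
begin

text \<open>Points of \<open>\<real>\<^sup>2 \<times> [0,\<infinity>)\<close> are triples \<open>(x,y,t)\<close>; functions on
  \<open>\<T>\<^sup>2 \<times> \<real>\<^sup>+\<close> are functions on triples that are \<open>2\<pi>\<close>-periodic in \<open>x\<close> and \<open>y\<close>,
  considered on the closed half-space \<open>t \<ge> 0\<close>.\<close>

definition halfspace :: "(real \<times> real \<times> real) set" where
  "halfspace = {p. snd (snd p) \<ge> 0}"

definition coord_dir :: "nat \<Rightarrow> real \<times> real \<times> real" where
  "coord_dir i = (if i = 0 then (1,0,0) else if i = 1 then (0,1,0) else (0,0,1))"

definition torus_periodic :: "(real \<times> real \<times> real \<Rightarrow> 'a) \<Rightarrow> bool" where
  "torus_periodic f \<longleftrightarrow>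
     (\<forall>x y t. f (x + 2*pi, y, t) = f (x, y, t) \<and> f (x, y + 2*pi, t) = f (x, y, t))"

text \<open>\<open>g\<close> is the partial derivative of \<open>f\<close> in coordinate \<open>i\<close> (0 = x, 1 = y, 2 = t)
  at every point of the half-space (one-sided in \<open>t\<close> at \<open>t = 0\<close>).\<close>
definition has_partial ::
  "(real \<times> real \<times> real \<Rightarrow> complex) \<Rightarrow> nat \<Rightarrow> (real \<times> real \<times> real \<Rightarrow> complex) \<Rightarrow> bool" where
  "has_partial f i g \<longleftrightarrow>
     (\<forall>p \<in> halfspace.
        ((\<lambda>s. f (p + s *\<^sub>R coord_dir i)) has_vector_derivative g p)
          (at 0 within {s. p + s *\<^sub>R coord_dir i \<in> halfspace}))"

definition bounded_continuous_on_H :: "(real \<times> real \<times> real \<Rightarrow> 'a::real_normed_vector) \<Rightarrow> bool" where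
  "bounded_continuous_on_H f \<longleftrightarrow> continuous_on halfspace f \<and> bounded (f ` halfspace)"

text \<open>Uniformly \<open>C\<^sup>2\<close> with first partials \<open>D1 i\<close> and second partials \<open>D2 i j = \<partial>\<^sub>j \<partial>\<^sub>i f\<close>:
  all partial derivatives of order at most 2 exist, are continuous and bounded.\<close>
definition uniformly_C2_with ::
  "(real \<times> real \<times> real \<Rightarrow> complex) \<Rightarrow> (nat \<Rightarrow> real \<times> real \<times> real \<Rightarrow> complex)
     \<Rightarrow> (nat \<Rightarrow> nat \<Rightarrow> real \<times> real \<times> real \<Rightarrow> complex) \<Rightarrow> bool" where
  "uniformly_C2_with f D1 D2 \<longleftrightarrow>
     bounded_continuous_on_H f \<and>
     (\<forall>i<3. has_partial f i (D1 i) \<and> bounded_continuous_on_H (D1 i)) \<and>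
     (\<forall>i<3. \<forall>j<3. has_partial (D1 i) j (D2 i j) \<and> bounded_continuous_on_H (D2 i j))"

end

(* The solution is u(x, y, t) = A(t) V(e^t, x, y), where A(t) = exp ((1 - e^(2t)) / 2) decays
   double exponentially and V(s, x, y) = sum_k phi(s - k) e_k(x, y) uses a C^2 bump phi supported
   in [-1, 1] to hand the profile over from the mode e_k = e^(ikx) (k even) or e^(iky) (k odd) to
   e_(k+1) as s crosses the integers. Because A' = -e^(2t) A, the damping cancels the Laplacian of
   the active modes, whose frequencies are within 1 of e^t, so u_t - Delta u = O(A e^t). Because
   consecutive modes depend on different variables, |grad u| is at least a fixed multiple of A e^t.
   Hence B = (u_t - Delta u) conj(grad u) / |grad u|^2 is bounded and continuous, and it makes u a
   solution. *)

theory Submission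
  imports Defs "HOL-Computational_Algebra.Polynomial"
begin

section \<open>Bump function\<close>

definition bump :: "real \<Rightarrow> real" where
  "bump r = (if \<bar>r\<bar> \<le> 1 then (1 - r\<^sup>2)^3 else 0)"

definition bump' :: "real \<Rightarrow> real" where
  "bump' r = (if \<bar>r\<bar> \<le> 1 then -6 * r * (1 - r\<^sup>2)\<^sup>2 else 0)"

definition bump'' :: "real \<Rightarrow> real" where
  "bump'' r = (if \<bar>r\<bar> \<le> 1 then 24 * r\<^sup>2 * (1 - r\<^sup>2) - 6 * (1 - r\<^sup>2)\<^sup>2 else 0)"

lemma abs_eq_1_imp_sq: "\<bar>r::real\<bar> = 1 \<Longrightarrow> r\<^sup>2 = 1"
  by (metis abs_power2 power_one power2_abs)

lemma has_real_derivative_cutoff: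
  fixes P P' :: "real \<Rightarrow> real"
  assumes "\<And>r. (P has_real_derivative P' r) (at r)"
    and "\<And>r. \<bar>r\<bar> = 1 \<Longrightarrow> P r = 0" and "\<And>r. \<bar>r\<bar> = 1 \<Longrightarrow> P' r = 0"
  shows "((\<lambda>r. if \<bar>r\<bar> \<le> 1 then P r else 0) has_real_derivative
            (if \<bar>r\<bar> \<le> 1 then P' r else 0)) (at r)"
proof -
  let ?S = "{r::real. \<bar>r\<bar> \<le> 1}" and ?T = "{r::real. 1 \<le> \<bar>r\<bar>}"
  have closed: "closed ?S" "closed ?T"
    by (intro closed_Collect_le continuous_intros)+
  have "((\<lambda>r. if r \<in> ?S then P r else 0) has_vector_derivative
            (if r \<in> ?S then P' r else 0)) (at r within UNIV)"
  proof (rule has_vector_derivative_If_within_closures[where T = ?T])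
    show "(P has_vector_derivative P' r) (at r within ?S \<union> (closure ?S \<inter> closure ?T))"
      using assms(1) has_field_derivative_at_within
      unfolding has_real_derivative_iff_has_vector_derivative[symmetric] by blast
  qed (use assms(2,3) closed in auto)
  then show ?thesis
    by (simp add: has_real_derivative_iff_has_vector_derivative)
qed

lemma bump_has_real_derivative: "(bump has_real_derivative bump' r) (at r)"
  unfolding bump_def[abs_def] bump'_def
  by (rule has_real_derivative_cutoff) (auto intro!: derivative_eq_intros simp: abs_eq_1_imp_sq)

lemma bump'_has_real_derivative: "(bump' has_real_derivative bump'' r) (at r)"
  unfolding bump'_def[abs_def] bump''_def
proof (rule has_real_derivative_cutoff)
  show "((\<lambda>r. -6 * r * (1 - r\<^sup>2)\<^sup>2) has_real_derivative
          24 * r\<^sup>2 * (1 - r\<^sup>2) - 6 * (1 - r\<^sup>2)\<^sup>2) (at r)" for r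
    by (auto intro!: derivative_eq_intros simp: algebra_simps power2_eq_square)
qed (simp_all add: abs_eq_1_imp_sq)

lemma continuous_on_bump'': "continuous_on UNIV bump''"
proof -
  have "continuous_on ({r. \<bar>r\<bar> \<le> 1} \<union> {r. 1 \<le> \<bar>r\<bar>}) bump''"
    unfolding bump''_def[abs_def]
    by (rule continuous_on_cases)
       (auto intro!: continuous_intros closed_Collect_le simp: abs_eq_1_imp_sq)
  moreover have "{r::real. \<bar>r\<bar> \<le> 1} \<union> {r. 1 \<le> \<bar>r\<bar>} = UNIV" by auto
  ultimately show ?thesis by simp
qed

lemma continuous_on_bump: "continuous_on UNIV bump"
  and continuous_on_bump': "continuous_on UNIV bump'"
  using bump_has_real_derivative bump'_has_real_derivative
  by (meson DERIV_isCont continuous_at_imp_continuous_on)+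

lemma bump_eq_0:
  assumes "1 \<le> \<bar>r\<bar>"
  shows "bump r = 0" and "bump' r = 0" and "bump'' r = 0"
  using assms by (cases "\<bar>r\<bar> = 1"; simp add: bump_def bump'_def bump''_def abs_eq_1_imp_sq)+

lemma abs_le_1_imp:
  assumes "\<bar>r::real\<bar> \<le> 1"
  shows "0 \<le> 1 - r\<^sup>2" and "1 - r\<^sup>2 \<le> 1" and "r\<^sup>2 \<le> 1"
  using assms abs_le_square_iff[of r 1] by auto

lemma abs_bump_le: "\<bar>bump r\<bar> \<le> 1"
  using abs_le_1_imp[of r] by (auto simp: bump_def power_le_one)

lemma abs_bump'_le: "\<bar>bump' r\<bar> \<le> 6"
proof (cases "\<bar>r\<bar> \<le> 1")
  case True
  note r = abs_le_1_imp[OF True]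
  have "\<bar>r\<bar> * (1 - r\<^sup>2)\<^sup>2 \<le> 1 * 1"
    using True r by (intro mult_mono power_le_one) auto
  then show ?thesis using True by (simp add: bump'_def abs_mult)
qed (simp add: bump'_def)

lemma abs_bump''_le: "\<bar>bump'' r\<bar> \<le> 30"
proof (cases "\<bar>r\<bar> \<le> 1")
  case True
  note r = abs_le_1_imp[OF True]
  have "(1 - r\<^sup>2)\<^sup>2 \<le> 1" "r\<^sup>2 * (1 - r\<^sup>2) \<le> 1" "0 \<le> r\<^sup>2 * (1 - r\<^sup>2)"
    using r by (auto simp: power_le_one mult_le_one)
  then have "\<bar>24 * (r\<^sup>2 * (1 - r\<^sup>2)) - 6 * (1 - r\<^sup>2)\<^sup>2\<bar> \<le> 30"
    using zero_le_power2[of "1 - r\<^sup>2"] unfolding abs_le_iff by linarith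
  then show ?thesis using True by (simp add: bump''_def mult.assoc)
qed (simp add: bump''_def)

lemma bump_sq_add_bump_sq_ge:
  assumes "0 \<le> r" "r < 1"
  shows "1/6 \<le> (bump r)\<^sup>2 + (bump (r - 1))\<^sup>2"
proof -
  have central: "1/6 \<le> (bump q)\<^sup>2" if "\<bar>q\<bar> \<le> 1/2" for q :: real
  proof -
    have "q\<^sup>2 \<le> (1/2)\<^sup>2" using that abs_le_square_iff by fastforce
    then have "3/4 \<le> 1 - q\<^sup>2" by (simp add: power_divide)
    then have "((3/4::real)^3)\<^sup>2 \<le> ((1 - q\<^sup>2)^3)\<^sup>2" by (intro power_mono) auto
    moreover have "bump q = (1 - q\<^sup>2)^3" using that by (simp add: bump_def)
    ultimately show ?thesis by (simp add: power_divide)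
  qed
  show ?thesis
    using central[of r] central[of "r - 1"] assms
    by (cases "r \<le> 1/2") (auto intro: add_increasing add_increasing2)
qed

section \<open>Interpolation between consecutive integers\<close>

(* interp psi S s = sum_k psi (s - k) S k when psi vanishes outside (-1, 1). *)
definition interp :: "(real \<Rightarrow> real) \<Rightarrow> (int \<Rightarrow> 'a::real_vector) \<Rightarrow> real \<Rightarrow> 'a" where
  "interp \<psi> S s = \<psi> (s - \<lfloor>s\<rfloor>) *\<^sub>R S \<lfloor>s\<rfloor> + \<psi> (s - \<lfloor>s\<rfloor> - 1) *\<^sub>R S (\<lfloor>s\<rfloor> + 1)"

lemma interp_eq_local:
  assumes vanish: "\<And>r. 1 \<le> \<bar>r\<bar> \<Longrightarrow> \<psi> r = 0"
    and "of_int n - 1 < s" "s < of_int n + 1"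
  shows "interp \<psi> S s = \<psi> (s - of_int (n - 1)) *\<^sub>R S (n - 1) + \<psi> (s - of_int n) *\<^sub>R S n
                          + \<psi> (s - of_int (n + 1)) *\<^sub>R S (n + 1)"
proof -
  consider "\<lfloor>s\<rfloor> = n - 1" "s < of_int n" | "\<lfloor>s\<rfloor> = n" "of_int n \<le> s"
    using assms(2,3) by linarith
  then show ?thesis
  proof cases
    case 1
    then have "\<psi> (s - of_int (n + 1)) = 0" by (intro vanish) simp
    with 1 show ?thesis by (simp add: interp_def)
  next
    case 2
    then have "\<psi> (s - of_int (n - 1)) = 0" by (intro vanish) simp
    with 2 show ?thesis by (simp add: interp_def algebra_simps)
  qed
qed

lemma mem_floor_neighbourhood: "s \<in> {of_int \<lfloor>s\<rfloor> - 1 <..< of_int \<lfloor>s\<rfloor> + 1}"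
  by simp linarith

lemma has_vector_derivative_interp:
  assumes "\<And>r. (\<psi> has_real_derivative \<psi>' r) (at r)"
    and "\<And>r. 1 \<le> \<bar>r\<bar> \<Longrightarrow> \<psi> r = 0" and "\<And>r. 1 \<le> \<bar>r\<bar> \<Longrightarrow> \<psi>' r = 0"
  shows "(interp \<psi> S has_vector_derivative interp \<psi>' S s) (at s)"
proof -
  define n where "n = \<lfloor>s\<rfloor>"
  define U :: "real set" where "U = {of_int n - 1 <..< of_int n + 1}"
  have U: "open U" "s \<in> U" unfolding U_def n_def using mem_floor_neighbourhood by auto
  have shifted: "((\<lambda>r. \<psi> (r - c) *\<^sub>R S k) has_vector_derivative \<psi>' (s - c) *\<^sub>R S k) (at s)" for c k
  proof -
    have "((\<lambda>r. \<psi> (r - c)) has_real_derivative \<psi>' (s - c) * 1) (at s)"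
      by (rule DERIV_chain2[OF assms(1)]) (auto intro!: derivative_eq_intros)
    then show ?thesis
      using has_vector_derivative_scaleR[OF _ has_vector_derivative_const[of "S k"]]
      by (simp add: has_real_derivative_iff_has_vector_derivative)
  qed
  have "interp \<psi>' S s = \<psi>' (s - of_int (n - 1)) *\<^sub>R S (n - 1) + \<psi>' (s - of_int n) *\<^sub>R S n
                          + \<psi>' (s - of_int (n + 1)) *\<^sub>R S (n + 1)"
    by (rule interp_eq_local) (use assms(3) U(2) in \<open>auto simp: U_def\<close>)
  then have "((\<lambda>r. \<psi> (r - of_int (n - 1)) *\<^sub>R S (n - 1) + \<psi> (r - of_int n) *\<^sub>R S n
              + \<psi> (r - of_int (n + 1)) *\<^sub>R S (n + 1)) has_vector_derivative interp \<psi>' S s) (at s)"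
    by (simp only:) (intro has_vector_derivative_add shifted)
  then show ?thesis
    by (rule has_vector_derivative_transform_within_open[OF _ U])
       (rule interp_eq_local[symmetric], use assms(2) in \<open>auto simp: U_def\<close>)
qed

lemma continuous_on_interp:
  fixes S :: "int \<Rightarrow> 'b::t2_space \<Rightarrow> 'a::real_normed_vector" and \<sigma> :: "'b \<Rightarrow> real"
  assumes "continuous_on UNIV \<psi>" "\<And>r. 1 \<le> \<bar>r\<bar> \<Longrightarrow> \<psi> r = 0"
    and "\<And>k. continuous_on UNIV (S k)" "continuous_on UNIV \<sigma>"
  shows "continuous_on UNIV (\<lambda>z. interp \<psi> (\<lambda>k. S k z) (\<sigma> z))"
proof (rule continuous_at_imp_continuous_on, intro ballI)
  fix z0
  define n where "n = \<lfloor>\<sigma> z0\<rfloor>"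
  define U where "U = \<sigma> -` {of_int n - 1 <..< of_int n + 1}"
  have U: "open U" "z0 \<in> U"
    using mem_floor_neighbourhood[of "\<sigma> z0"] open_vimage[OF _ assms(4)]
    unfolding U_def n_def by auto
  let ?g = "\<lambda>z. \<psi> (\<sigma> z - of_int (n - 1)) *\<^sub>R S (n - 1) z + \<psi> (\<sigma> z - of_int n) *\<^sub>R S n z
              + \<psi> (\<sigma> z - of_int (n + 1)) *\<^sub>R S (n + 1) z"
  have "continuous_on UNIV (\<lambda>z. \<psi> (\<sigma> z - c))" for c
    using continuous_on_compose2[OF assms(1) continuous_on_diff[OF assms(4) continuous_on_const]]
    by simp
  then have "continuous_on UNIV ?g"
    by (intro continuous_on_add continuous_on_scaleR assms(3))
  then have cont: "isCont ?g z0" by (simp add: continuous_on_eq_continuous_at)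
  have "interp \<psi> (\<lambda>k. S k z) (\<sigma> z) = ?g z" if "z \<in> U" for z
    by (rule interp_eq_local) (use assms(2) that in \<open>auto simp: U_def\<close>)
  then have "eventually (\<lambda>z. interp \<psi> (\<lambda>k. S k z) (\<sigma> z) = ?g z) (nhds z0)"
    using U eventually_nhds by blast
  then show "isCont (\<lambda>z. interp \<psi> (\<lambda>k. S k z) (\<sigma> z)) z0"
    by (rule isCont_cong[THEN iffD2, OF _ cont])
qed

lemma norm_interp_le:
  assumes "\<And>r. \<bar>\<psi> r\<bar> \<le> K" "norm (S \<lfloor>s\<rfloor>) \<le> M" "norm (S (\<lfloor>s\<rfloor> + 1)) \<le> M"
  shows "norm (interp \<psi> S s) \<le> 2 * K * M"
proof -
  have "norm (interp \<psi> S s) \<le> \<bar>\<psi> (s - \<lfloor>s\<rfloor>)\<bar> * norm (S \<lfloor>s\<rfloor>)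
                               + \<bar>\<psi> (s - \<lfloor>s\<rfloor> - 1)\<bar> * norm (S (\<lfloor>s\<rfloor> + 1))"
    unfolding interp_def by (rule order_trans[OF norm_triangle_ineq]) simp
  also have "\<dots> \<le> K * M + K * M"
    using assms order_trans[OF abs_ge_zero assms(1)]
    by (intro add_mono mult_mono) auto
  finally show ?thesis by simp
qed

section \<open>Double exponential damping\<close>

definition damp :: "real \<Rightarrow> real" where
  "damp t = exp ((1 - (exp t)\<^sup>2) / 2)"

lemma damp_pos: "0 < damp t"
  by (simp add: damp_def)

lemma damp_has_real_derivative: "(damp has_real_derivative - ((exp t)\<^sup>2 * damp t)) (at t)"
  unfolding damp_def[abs_def] by (auto intro!: derivative_eq_intros simp: power2_eq_square)

lemma continuous_on_damp: "continuous_on UNIV damp"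
  unfolding damp_def[abs_def] by (intro continuous_intros) auto

lemma damp_mult_power_le: "damp t * (2 + exp t)^6 \<le> 3456"
proof -
  define s where "s = exp t"
  define z where "z = s\<^sup>2 / 2"
  have "(2 + s)\<^sup>2 \<le> 4 * (2 + z)"
    using zero_le_power2[of "s - 2"] by (simp add: z_def power2_eq_square algebra_simps)
  moreover have "2 + z \<le> 3 * exp (z/3)"
    using exp_ge_add_one_self[of "z/3"] by linarith
  ultimately have "((2 + s)\<^sup>2)^3 \<le> (12 * exp (z/3))^3"
    by (intro power_mono) auto
  also have "\<dots> = 1728 * exp z"
    by (simp add: power_mult_distrib flip: exp_of_nat_mult)
  finally have "(2 + s)^6 \<le> 1728 * exp z" by (simp flip: power_mult)
  then have "damp t * (2 + s)^6 \<le> damp t * (1728 * exp z)"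
    using damp_pos less_imp_le by (intro mult_left_mono) auto
  also have "\<dots> = exp (1/2) * exp (- z) * (1728 * exp z)"
    by (simp add: damp_def z_def s_def flip: exp_add add_divide_distrib)
  also have "\<dots> \<le> 3456" using exp_half_le2 by (simp add: exp_minus field_simps)
  finally show ?thesis by (simp add: s_def)
qed

lemma double_exponential_decay:
  assumes "2 \<le> T" "T \<le> t"
  shows "2 * damp t \<le> exp (- exp T)"
proof -
  have "(2::real) * 2 \<le> exp 1 * exp 1"
    using exp_ge_add_one_self[of 1] by (intro mult_mono) auto
  then have "4 \<le> exp (2::real)" by (simp flip: exp_add)
  then have T4: "4 \<le> exp T" using assms(1) order_trans by fastforce
  have "exp T \<le> exp t" using assms(2) by simp
  then have "4 * exp T \<le> (exp t)\<^sup>2"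
    using T4 mult_mono[of 4 "exp t" "exp T" "exp t"] by (simp add: power2_eq_square)
  then have "ln 2 + (1 - (exp t)\<^sup>2) / 2 \<le> - exp T"
    using ln_2_less_1 T4 by (simp add: field_simps)
  then have "exp (ln 2 + (1 - (exp t)\<^sup>2) / 2) \<le> exp (- exp T)" by simp
  then show ?thesis by (simp add: damp_def exp_add)
qed

section \<open>The ansatz\<close>

lemma abs_poly_le_power:
  fixes c :: "real poly"
  assumes "0 \<le> s" "degree c \<le> n"
  shows "\<bar>poly c s\<bar> \<le> (\<Sum>i\<le>degree c. \<bar>coeff c i\<bar>) * (1 + s)^n"
proof -
  have "\<bar>poly c s\<bar> \<le> (\<Sum>i\<le>degree c. \<bar>coeff c i\<bar> * s^i)"
    unfolding poly_altdef using assms(1)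
    by (auto intro!: order_trans[OF sum_abs] simp: abs_mult)
  also have "\<dots> \<le> (\<Sum>i\<le>degree c. \<bar>coeff c i\<bar> * (1 + s)^n)"
  proof (intro sum_mono mult_left_mono)
    fix i assume "i \<in> {..degree c}"
    then have "s^i \<le> (1 + s)^i \<and> (1 + s)^i \<le> (1 + s)^n"
      using assms by (auto intro: power_mono power_increasing)
    then show "s^i \<le> (1 + s)^n" by linarith
  qed simp
  finally show ?thesis by (simp add: sum_distrib_right)
qed

(* d/dt (damp t * poly c (e^t)) = damp t * poly (time_coeff c) (e^t), since damp' t = - e^(2t) damp t. *)
definition time_coeff :: "real poly \<Rightarrow> real poly" where
  "time_coeff c = pCons 0 (pderiv c) - pCons 0 (pCons 0 c)"

lemma degree_time_coeff_le: "degree (time_coeff c) \<le> degree c + 2"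
  unfolding time_coeff_def
  by (intro degree_diff_le) (auto simp: degree_pCons_le degree_pderiv intro: order_trans[OF degree_pCons_le])

(* The solution and all of its derivatives are sums of such terms. *)
definition ansatz ::
  "real poly \<Rightarrow> (real \<Rightarrow> real) \<Rightarrow> (int \<Rightarrow> real \<Rightarrow> real \<Rightarrow> complex) \<Rightarrow> real \<times> real \<times> real \<Rightarrow> complex"
  where "ansatz c \<psi> S = (\<lambda>(x, y, t). (damp t * poly c (exp t)) *\<^sub>R interp \<psi> (\<lambda>k. S k x y) (exp t))"

lemma ansatz_apply:
  "ansatz c \<psi> S (x, y, t) = (damp t * poly c (exp t)) *\<^sub>R interp \<psi> (\<lambda>k. S k x y) (exp t)"
  by (simp add: ansatz_def)

definition ansatz_t ::
  "real poly \<Rightarrow> (real \<Rightarrow> real) \<Rightarrow> (real \<Rightarrow> real) \<Rightarrow> (int \<Rightarrow> real \<Rightarrow> real \<Rightarrow> complex)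
     \<Rightarrow> real \<times> real \<times> real \<Rightarrow> complex"
  where "ansatz_t c \<psi> \<psi>' S = (\<lambda>p. ansatz (time_coeff c) \<psi> S p + ansatz (pCons 0 c) \<psi>' S p)"

lemma ansatz_has_vector_derivative_t:
  assumes "\<And>r. (\<psi> has_real_derivative \<psi>' r) (at r)"
    and "\<And>r. 1 \<le> \<bar>r\<bar> \<Longrightarrow> \<psi> r = 0" and "\<And>r. 1 \<le> \<bar>r\<bar> \<Longrightarrow> \<psi>' r = 0"
  shows "((\<lambda>t. ansatz c \<psi> S (x, y, t)) has_vector_derivative ansatz_t c \<psi> \<psi>' S (x, y, t)) (at t)"
proof -
  have amplitude: "((\<lambda>t. damp t * poly c (exp t)) has_real_derivative
                     damp t * poly (time_coeff c) (exp t)) (at t)"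
    by (rule DERIV_mult[OF damp_has_real_derivative DERIV_chain2[OF poly_DERIV DERIV_exp], THEN DERIV_cong])
       (simp add: time_coeff_def algebra_simps power2_eq_square)
  have "(exp has_vector_derivative exp t) (at t)"
    using DERIV_exp has_real_derivative_iff_has_vector_derivative by blast
  then have "((interp \<psi> (\<lambda>k. S k x y) \<circ> exp) has_vector_derivative
          exp t *\<^sub>R interp \<psi>' (\<lambda>k. S k x y) (exp t)) (at t)"
    by (rule vector_diff_chain_at[OF _ has_vector_derivative_interp[OF assms]])
  from has_vector_derivative_scaleR[OF amplitude this[unfolded o_def]] show ?thesis
    by (simp add: ansatz_t_def ansatz_apply algebra_simps)
qed

lemma ansatz_t_has_vector_derivative_t:
  assumes "\<And>r. (\<psi> has_real_derivative \<psi>' r) (at r)" "\<And>r. (\<psi>' has_real_derivative \<psi>'' r) (at r)"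
    and "\<And>r. 1 \<le> \<bar>r\<bar> \<Longrightarrow> \<psi> r = 0" "\<And>r. 1 \<le> \<bar>r\<bar> \<Longrightarrow> \<psi>' r = 0" "\<And>r. 1 \<le> \<bar>r\<bar> \<Longrightarrow> \<psi>'' r = 0"
  shows "((\<lambda>t. ansatz_t c \<psi> \<psi>' S (x, y, t)) has_vector_derivative
           ansatz_t (time_coeff c) \<psi> \<psi>' S (x, y, t) + ansatz_t (pCons 0 c) \<psi>' \<psi>'' S (x, y, t)) (at t)"
  unfolding ansatz_t_def[of c]
  by (intro has_vector_derivative_add ansatz_has_vector_derivative_t assms)

lemma ansatz_has_vector_derivative_x:
  assumes "\<And>k. ((\<lambda>x. S k x y) has_vector_derivative S' k x y) (at x)"
  shows "((\<lambda>x. ansatz c \<psi> S (x, y, t)) has_vector_derivative ansatz c \<psi> S' (x, y, t)) (at x)"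
  unfolding ansatz_apply interp_def
  by (intro bounded_linear.has_vector_derivative[OF bounded_linear_scaleR_right]
      has_vector_derivative_add assms)

lemma ansatz_has_vector_derivative_y:
  assumes "\<And>k. ((\<lambda>y. S k x y) has_vector_derivative S' k x y) (at y)"
  shows "((\<lambda>y. ansatz c \<psi> S (x, y, t)) has_vector_derivative ansatz c \<psi> S' (x, y, t)) (at y)"
  unfolding ansatz_apply interp_def
  by (intro bounded_linear.has_vector_derivative[OF bounded_linear_scaleR_right]
      has_vector_derivative_add assms)

lemma ansatz_t_has_vector_derivative_x:
  assumes "\<And>k. ((\<lambda>x. S k x y) has_vector_derivative S' k x y) (at x)"
  shows "((\<lambda>x. ansatz_t c \<psi> \<psi>' S (x, y, t)) has_vector_derivative ansatz_t c \<psi> \<psi>' S' (x, y, t)) (at x)"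
  unfolding ansatz_t_def by (intro has_vector_derivative_add ansatz_has_vector_derivative_x assms)

lemma ansatz_t_has_vector_derivative_y:
  assumes "\<And>k. ((\<lambda>y. S k x y) has_vector_derivative S' k x y) (at y)"
  shows "((\<lambda>y. ansatz_t c \<psi> \<psi>' S (x, y, t)) has_vector_derivative ansatz_t c \<psi> \<psi>' S' (x, y, t)) (at y)"
  unfolding ansatz_t_def by (intro has_vector_derivative_add ansatz_has_vector_derivative_y assms)

lemma ansatz_zero_modes: "ansatz c \<psi> (\<lambda>k x y. 0) = (\<lambda>p. 0)"
  by (simp add: ansatz_def interp_def fun_eq_iff)

lemma torus_periodic_ansatz:
  assumes "\<And>k x y. S k (x + 2 * pi) y = S k x y" "\<And>k x y. S k x (y + 2 * pi) = S k x y"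
  shows "torus_periodic (ansatz c \<psi> S)"
  by (simp add: torus_periodic_def ansatz_apply assms)

lemma torus_periodic_ansatz_t:
  assumes "\<And>k x y. S k (x + 2 * pi) y = S k x y" "\<And>k x y. S k x (y + 2 * pi) = S k x y"
  shows "torus_periodic (ansatz_t c \<psi> \<psi>' S)"
  using assms by (simp add: torus_periodic_def ansatz_t_def ansatz_apply)

lemma continuous_on_ansatz:
  assumes "continuous_on UNIV \<psi>" "\<And>r. 1 \<le> \<bar>r\<bar> \<Longrightarrow> \<psi> r = 0"
    and "\<And>k. continuous_on UNIV (\<lambda>(x, y). S k x y)"
  shows "continuous_on UNIV (ansatz c \<psi> S)"
proof -
  have "continuous_on UNIV (\<lambda>p :: real \<times> real \<times> real.
      damp (snd (snd p)) * poly c (exp (snd (snd p))))"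
    by (intro continuous_intros continuous_on_compose2[OF continuous_on_damp]) auto
  moreover have "continuous_on UNIV (\<lambda>p. (\<lambda>(x, y). S k x y) (fst p, fst (snd p)))" for k
    by (rule continuous_on_compose2[OF assms(3)]) (auto intro!: continuous_intros)
  then have "continuous_on UNIV
      (\<lambda>p. interp \<psi> (\<lambda>k. S k (fst p) (fst (snd p))) (exp (snd (snd p))))"
    by (intro continuous_on_interp assms(1,2)) (auto intro!: continuous_intros)
  ultimately have "continuous_on UNIV (\<lambda>p :: real \<times> real \<times> real.
      (damp (snd (snd p)) * poly c (exp (snd (snd p)))) *\<^sub>R
        interp \<psi> (\<lambda>k. S k (fst p) (fst (snd p))) (exp (snd (snd p))))"
    by (rule continuous_on_scaleR)
  then show ?thesis
    by (simp add: ansatz_def case_prod_beta')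
qed

lemma bounded_ansatz:
  assumes "degree c \<le> 4" "\<And>r. \<bar>\<psi> r\<bar> \<le> K"
    and "\<And>k x y. 0 \<le> k \<Longrightarrow> norm (S k x y) \<le> M * (1 + of_int k)\<^sup>2"
  shows "bounded (range (ansatz c \<psi> S))"
proof -
  define C where "C = (\<Sum>i\<le>degree c. \<bar>coeff c i\<bar>)"
  have K: "0 \<le> K" and M: "0 \<le> M"
    using order_trans[OF abs_ge_zero assms(2)] order_trans[OF norm_ge_zero assms(3)[of 0]] by auto
  have "norm (ansatz c \<psi> S (x, y, t)) \<le> 2 * C * K * M * 3456" for x y t
  proof -
    define s where "s = exp t"
    have s: "0 < s" "of_int \<lfloor>s\<rfloor> \<le> s" "0 \<le> \<lfloor>s\<rfloor>" by (auto simp: s_def)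
    have "\<bar>poly c s\<bar> \<le> C * (1 + s)^4"
      unfolding C_def using s by (intro abs_poly_le_power assms(1)) auto
    also have "\<dots> \<le> C * (2 + s)^4"
      using s by (intro mult_left_mono power_mono) (auto simp: C_def)
    finally have poly_le: "\<bar>poly c s\<bar> \<le> C * (2 + s)^4" .
    have "norm (S k x y) \<le> M * (2 + s)\<^sup>2" if "k = \<lfloor>s\<rfloor> \<or> k = \<lfloor>s\<rfloor> + 1" for k
    proof -
      have "0 \<le> k" "1 + of_int k \<le> 2 + s" using that s by linarith+
      then have "0 \<le> k" "(1 + of_int k)\<^sup>2 \<le> (2 + s)\<^sup>2" by (auto intro!: power_mono)
      then show ?thesis using assms(3)[of k x y] mult_left_mono[OF _ M] by (meson order_trans)
    qed
    then have interp_le: "norm (interp \<psi> (\<lambda>k. S k x y) s) \<le> 2 * K * (M * (2 + s)\<^sup>2)"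
      by (intro norm_interp_le assms(2)) auto
    have "norm (ansatz c \<psi> S (x, y, t)) = damp t * (\<bar>poly c s\<bar> * norm (interp \<psi> (\<lambda>k. S k x y) s))"
      by (simp add: ansatz_apply s_def abs_mult damp_pos less_imp_le)
    also have "\<dots> \<le> damp t * ((C * (2 + s)^4) * (2 * K * (M * (2 + s)\<^sup>2)))"
      using poly_le interp_le damp_pos[of t] K M
      by (intro mult_left_mono mult_mono) (auto simp: C_def)
    also have "\<dots> = 2 * C * K * M * (damp t * (2 + s)^6)"
      by (simp add: algebra_simps flip: power_add)
    also have "\<dots> \<le> 2 * C * K * M * 3456"
      using damp_mult_power_le[of t] K M by (intro mult_left_mono) (auto simp: s_def C_def)
    finally show ?thesis .
  qed
  then show ?thesis by (auto intro!: boundedI)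
qed

section \<open>Fourier modes\<close>

(* Even frequencies oscillate in x and odd ones in y, so the gradients of consecutive modes are orthogonal. *)
definition mode :: "int \<Rightarrow> real \<Rightarrow> real \<Rightarrow> complex" where
  "mode k x y = (if even k then cis (of_int k * x) else cis (of_int k * y))"

definition mode_dx :: "int \<Rightarrow> real \<Rightarrow> real \<Rightarrow> complex" where
  "mode_dx k x y = (if even k then \<i> * of_int k * mode k x y else 0)"

definition mode_dy :: "int \<Rightarrow> real \<Rightarrow> real \<Rightarrow> complex" where
  "mode_dy k x y = (if even k then 0 else \<i> * of_int k * mode k x y)"

definition mode_dxx :: "int \<Rightarrow> real \<Rightarrow> real \<Rightarrow> complex" where
  "mode_dxx k x y = (if even k then - (of_int k ^ 2 * mode k x y) else 0)"

definition mode_dyy :: "int \<Rightarrow> real \<Rightarrow> real \<Rightarrow> complex" where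
  "mode_dyy k x y = (if even k then 0 else - (of_int k ^ 2 * mode k x y))"

lemmas mode_defs = mode_def mode_dx_def mode_dy_def mode_dxx_def mode_dyy_def

lemma cis_int_mult_add_2pi: "cis (of_int k * (x + 2 * pi)) = cis (of_int k * x)"
proof -
  have "cis (of_int k * (x + 2 * pi)) = cis (of_int k * x) * cis (2 * pi * of_int k)"
    by (simp add: cis_mult algebra_simps)
  then show ?thesis by simp
qed

lemma mode_periodic:
  "mode k (x + 2 * pi) y = mode k x y" "mode k x (y + 2 * pi) = mode k x y"
  by (simp_all add: mode_def cis_int_mult_add_2pi)

lemma modes_periodic:
  assumes "S \<in> {mode, mode_dx, mode_dy, mode_dxx, mode_dyy}"
  shows "S k (x + 2 * pi) y = S k x y" "S k x (y + 2 * pi) = S k x y"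
  using assms by (auto simp: mode_dx_def mode_dy_def mode_dxx_def mode_dyy_def mode_periodic)

lemma norm_mode [simp]: "norm (mode k x y) = 1"
  by (simp add: mode_def)

lemma mode_laplacian: "mode_dxx k x y + mode_dyy k x y = - ((of_int k)\<^sup>2 *\<^sub>R mode k x y)"
  by (simp add: mode_dxx_def mode_dyy_def scaleR_conv_of_real)

lemma has_vector_derivative_cis_mult:
  "((\<lambda>x. cis (a * x)) has_vector_derivative \<i> * of_real a * cis (a * x)) (at x)"
proof -
  have "((\<lambda>x. cis (a * x)) has_derivative (\<lambda>h. (a * h) *\<^sub>R (\<i> * cis (a * x)))) (at x)"
    by (intro has_derivative_cis derivative_intros)
  then show ?thesis
    by (simp add: has_vector_derivative_def scaleR_conv_of_real algebra_simps)
qed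

lemma mode_has_vector_derivative:
  "((\<lambda>x. mode k x y) has_vector_derivative mode_dx k x y) (at x)"
  "((\<lambda>y. mode k x y) has_vector_derivative mode_dy k x y) (at y)"
  "((\<lambda>x. mode_dx k x y) has_vector_derivative mode_dxx k x y) (at x)"
  "((\<lambda>y. mode_dy k x y) has_vector_derivative mode_dyy k x y) (at y)"
  "((\<lambda>y. mode_dx k x y) has_vector_derivative 0) (at y)"
  "((\<lambda>x. mode_dy k x y) has_vector_derivative 0) (at x)"
  using has_vector_derivative_cis_mult[of "of_int k" x] has_vector_derivative_cis_mult[of "of_int k" y]
    has_vector_derivative_mult_right[OF has_vector_derivative_cis_mult, of "\<i> * of_int k" "of_int k"]
  by (cases "even k"; simp add: mode_defs power2_eq_square algebra_simps)+

lemma continuous_on_modes: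
  "continuous_on UNIV (\<lambda>(x, y). mode k x y)" "continuous_on UNIV (\<lambda>(x, y). mode_dx k x y)"
  "continuous_on UNIV (\<lambda>(x, y). mode_dy k x y)" "continuous_on UNIV (\<lambda>(x, y). mode_dxx k x y)"
  "continuous_on UNIV (\<lambda>(x, y). mode_dyy k x y)"
  by (cases "even k"; simp add: mode_defs case_prod_beta'; intro continuous_intros)+

lemma norm_modes_le:
  assumes "0 \<le> k"
  shows "norm (mode k x y) \<le> (1 + of_int k)\<^sup>2" "norm (mode_dx k x y) \<le> (1 + of_int k)\<^sup>2"
    "norm (mode_dy k x y) \<le> (1 + of_int k)\<^sup>2" "norm (mode_dxx k x y) \<le> (1 + of_int k)\<^sup>2"
    "norm (mode_dyy k x y) \<le> (1 + of_int k)\<^sup>2"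
proof -
  have "1 \<le> (1 + of_int k :: real)\<^sup>2" "\<bar>of_int k\<bar> \<le> (1 + of_int k :: real)\<^sup>2"
    "(of_int k)\<^sup>2 \<le> (1 + of_int k :: real)\<^sup>2"
    using assms by (auto simp: power2_eq_square algebra_simps intro: order_trans[of _ "1 + of_int k"])
  then show "norm (mode k x y) \<le> (1 + of_int k)\<^sup>2" "norm (mode_dx k x y) \<le> (1 + of_int k)\<^sup>2"
    "norm (mode_dy k x y) \<le> (1 + of_int k)\<^sup>2" "norm (mode_dxx k x y) \<le> (1 + of_int k)\<^sup>2"
    "norm (mode_dyy k x y) \<le> (1 + of_int k)\<^sup>2"
    by (simp_all add: mode_dx_def mode_dy_def mode_dxx_def mode_dyy_def norm_mult norm_power)
qed

lemma ansatz_in_bcontfun: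
  assumes "degree c \<le> 4" "\<psi> \<in> {bump, bump', bump''}"
    and "S \<in> {mode, mode_dx, mode_dy, mode_dxx, mode_dyy}"
  shows "ansatz c \<psi> S \<in> bcontfun"
proof -
  have "\<bar>bump r\<bar> \<le> 30" "\<bar>bump' r\<bar> \<le> 30" for r
    using abs_bump_le[of r] abs_bump'_le[of r] by linarith+
  then have \<psi>: "continuous_on UNIV \<psi>" "\<And>r. \<bar>\<psi> r\<bar> \<le> 30" "\<And>r. 1 \<le> \<bar>r\<bar> \<Longrightarrow> \<psi> r = 0"
    using assms(2) continuous_on_bump continuous_on_bump' continuous_on_bump'' bump_eq_0 abs_bump''_le
    by auto
  have S: "\<And>k. continuous_on UNIV (\<lambda>(x, y). S k x y)"
    "\<And>k x y. 0 \<le> k \<Longrightarrow> norm (S k x y) \<le> 1 * (1 + of_int k)\<^sup>2"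
    using assms(3) continuous_on_modes norm_modes_le by auto
  show ?thesis
    unfolding bcontfun_def
    using continuous_on_ansatz[OF \<psi>(1,3) S(1)] bounded_ansatz[OF assms(1) \<psi>(2) S(2)] by simp
qed

lemma ansatz_t_in_bcontfun:
  assumes "degree c \<le> 2" "\<psi> \<in> {bump, bump', bump''}" "\<psi>' \<in> {bump, bump', bump''}"
    and "S \<in> {mode, mode_dx, mode_dy, mode_dxx, mode_dyy}"
  shows "ansatz_t c \<psi> \<psi>' S \<in> bcontfun"
  unfolding ansatz_t_def
  using assms degree_time_coeff_le[of c] degree_pCons_le[of 0 c]
  by (intro plus_cont ansatz_in_bcontfun) auto

lemma bcontfun_imp_bounded_continuous_on_H: "f \<in> bcontfun \<Longrightarrow> bounded_continuous_on_H f"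
  unfolding bcontfun_def bounded_continuous_on_H_def
  by (auto intro: continuous_on_subset bounded_subset)

lemma has_partialI:
  assumes "\<And>p. ((\<lambda>s. f (p + s *\<^sub>R coord_dir i)) has_vector_derivative g p) (at 0)"
  shows "has_partial f i g"
  unfolding has_partial_def using assms has_vector_derivative_at_within by blast

lemma has_vector_derivative_shift_0:
  assumes "(h has_vector_derivative D) (at x)"
  shows "((\<lambda>s. h (x + s)) has_vector_derivative D) (at 0)"
proof -
  have "((\<lambda>s. x + s) has_vector_derivative 1) (at 0)"
    by (auto intro!: derivative_eq_intros)
  then show ?thesis
    using vector_diff_chain_at[of "\<lambda>s. x + s" 1 0 h D] assms by (simp add: o_def)
qed

lemma has_partial_x:
  assumes "\<And>x y t. ((\<lambda>x. f (x, y, t)) has_vector_derivative g (x, y, t)) (at x)"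
  shows "has_partial f 0 g"
proof (rule has_partialI)
  fix p :: "real \<times> real \<times> real"
  obtain x y t where "p = (x, y, t)" by (cases p)
  then show "((\<lambda>s. f (p + s *\<^sub>R coord_dir 0)) has_vector_derivative g p) (at 0)"
    using has_vector_derivative_shift_0[OF assms] by (simp add: coord_dir_def)
qed

lemma has_partial_y:
  assumes "\<And>x y t. ((\<lambda>y. f (x, y, t)) has_vector_derivative g (x, y, t)) (at y)"
  shows "has_partial f 1 g"
proof (rule has_partialI)
  fix p :: "real \<times> real \<times> real"
  obtain x y t where "p = (x, y, t)" by (cases p)
  then show "((\<lambda>s. f (p + s *\<^sub>R coord_dir 1)) has_vector_derivative g p) (at 0)"
    using has_vector_derivative_shift_0[OF assms] by (simp add: coord_dir_def)
qed

lemma has_partial_t: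
  assumes "\<And>x y t. ((\<lambda>t. f (x, y, t)) has_vector_derivative g (x, y, t)) (at t)"
  shows "has_partial f 2 g"
proof (rule has_partialI)
  fix p :: "real \<times> real \<times> real"
  obtain x y t where "p = (x, y, t)" by (cases p)
  then show "((\<lambda>s. f (p + s *\<^sub>R coord_dir 2)) has_vector_derivative g p) (at 0)"
    using has_vector_derivative_shift_0[OF assms] by (simp add: coord_dir_def)
qed

definition sol :: "real \<times> real \<times> real \<Rightarrow> complex" where
  "sol = ansatz 1 bump mode"

definition sol_D1 :: "nat \<Rightarrow> real \<times> real \<times> real \<Rightarrow> complex" where
  "sol_D1 i = (if i = 0 then ansatz 1 bump mode_dx else if i = 1 then ansatz 1 bump mode_dy
               else ansatz_t 1 bump bump' mode)"

definition sol_D2 :: "nat \<Rightarrow> nat \<Rightarrow> real \<times> real \<times> real \<Rightarrow> complex" where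
  "sol_D2 i j =
     (if i = 2 \<and> j = 2 then
        (\<lambda>p. ansatz_t (time_coeff 1) bump bump' mode p + ansatz_t (pCons 0 1) bump' bump'' mode p)
      else if i = 2 \<or> j = 2 then ansatz_t 1 bump bump' (if i + j = 2 then mode_dx else mode_dy)
      else if i = j then ansatz 1 bump (if i = 0 then mode_dxx else mode_dyy)
      else (\<lambda>p. 0))"

lemma sol_D1_simps:
  "sol_D1 0 = ansatz 1 bump mode_dx" "sol_D1 1 = ansatz 1 bump mode_dy"
  "sol_D1 2 = ansatz_t 1 bump bump' mode"
  by (simp_all add: sol_D1_def)

lemma sol_D2_simps:
  "sol_D2 0 0 = ansatz 1 bump mode_dxx" "sol_D2 1 1 = ansatz 1 bump mode_dyy"
  "sol_D2 0 1 = (\<lambda>p. 0)" "sol_D2 1 0 = (\<lambda>p. 0)"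
  "sol_D2 0 2 = ansatz_t 1 bump bump' mode_dx" "sol_D2 2 0 = ansatz_t 1 bump bump' mode_dx"
  "sol_D2 1 2 = ansatz_t 1 bump bump' mode_dy" "sol_D2 2 1 = ansatz_t 1 bump bump' mode_dy"
  "sol_D2 2 2 =
     (\<lambda>p. ansatz_t (time_coeff 1) bump bump' mode p + ansatz_t (pCons 0 1) bump' bump'' mode p)"
  by (simp_all add: sol_D2_def)

lemma less_3_cases:
  assumes "i < (3::nat)"
  obtains "i = 0" | "i = 1" | "i = 2"
  using assms by (auto simp: numeral_3_eq_3 less_Suc_eq)

lemma sol_in_bcontfun:
  shows "sol \<in> bcontfun" and "i < 3 \<Longrightarrow> sol_D1 i \<in> bcontfun"
    and "i < 3 \<Longrightarrow> j < 3 \<Longrightarrow> sol_D2 i j \<in> bcontfun"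
proof -
  have "degree (time_coeff 1) \<le> 2"
    using degree_time_coeff_le[of 1] by simp
  then have D22: "sol_D2 2 2 \<in> bcontfun"
    unfolding sol_D2_simps by (intro plus_cont ansatz_t_in_bcontfun) auto
  show "sol \<in> bcontfun"
    unfolding sol_def by (intro ansatz_in_bcontfun) auto
  show "sol_D1 i \<in> bcontfun" if "i < 3"
    by (rule less_3_cases[OF that]; simp only: sol_D1_simps;
        intro ansatz_in_bcontfun ansatz_t_in_bcontfun; simp)
  show "sol_D2 i j \<in> bcontfun" if "i < 3" "j < 3"
    by (rule less_3_cases[OF that(1)]; rule less_3_cases[OF that(2)]; (simp only: D22)?;
        simp only: sol_D2_simps; intro const_bcontfun ansatz_in_bcontfun ansatz_t_in_bcontfun; simp)
qed

lemma sol_has_partial: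
  shows "i < 3 \<Longrightarrow> has_partial sol i (sol_D1 i)"
    and "i < 3 \<Longrightarrow> j < 3 \<Longrightarrow> has_partial (sol_D1 i) j (sol_D2 i j)"
proof -
  have "has_partial (ansatz 1 bump mode_dx) 1 (ansatz 1 bump (\<lambda>k x y. 0))"
    "has_partial (ansatz 1 bump mode_dy) 0 (ansatz 1 bump (\<lambda>k x y. 0))"
    by (intro has_partial_x has_partial_y ansatz_has_vector_derivative_x ansatz_has_vector_derivative_y
        mode_has_vector_derivative)+
  then have zero: "has_partial (sol_D1 0) 1 (sol_D2 0 1)" "has_partial (sol_D1 1) 0 (sol_D2 1 0)"
    by (simp_all only: sol_D1_simps sol_D2_simps ansatz_zero_modes)
  note rules = has_partial_x has_partial_y has_partial_t
    ansatz_has_vector_derivative_x ansatz_has_vector_derivative_y ansatz_has_vector_derivative_t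
    ansatz_t_has_vector_derivative_x ansatz_t_has_vector_derivative_y ansatz_t_has_vector_derivative_t
    mode_has_vector_derivative bump_has_real_derivative bump'_has_real_derivative bump_eq_0
  show "has_partial sol i (sol_D1 i)" if "i < 3"
    by (rule less_3_cases[OF that]; simp only: sol_def sol_D1_simps; intro rules)
  show "has_partial (sol_D1 i) j (sol_D2 i j)" if "i < 3" "j < 3"
    by (rule less_3_cases[OF that(1)]; rule less_3_cases[OF that(2)]; (simp only: zero)?;
        simp only: sol_D1_simps sol_D2_simps; intro rules)
qed

theorem sol_uniformly_C2: "uniformly_C2_with sol sol_D1 sol_D2"
  by (simp add: uniformly_C2_with_def bcontfun_imp_bounded_continuous_on_H sol_in_bcontfun sol_has_partial)

lemma torus_periodic_sol:
  "torus_periodic sol" "torus_periodic (sol_D1 i)" "torus_periodic (sol_D2 0 0)" "torus_periodic (sol_D2 1 1)"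
  unfolding sol_def sol_D1_def sol_D2_simps
  by (auto intro!: torus_periodic_ansatz torus_periodic_ansatz_t simp: modes_periodic)

lemma norm_sol_le: "cmod (sol (x, y, t)) \<le> 2 * damp t"
proof -
  have "cmod (interp bump (\<lambda>k. mode k x y) (exp t)) \<le> 2 * 1 * 1"
    by (rule norm_interp_le) (auto simp: abs_bump_le)
  then show ?thesis
    using damp_pos[of t] by (simp add: sol_def ansatz_apply)
qed

lemma sol_double_exponential_decay:
  assumes "2 \<le> T" "T \<le> t"
  shows "cmod (sol (x, y, t)) \<le> exp (- exp T)"
  using order_trans[OF norm_sol_le double_exponential_decay[OF assms]] .

lemma sol_origin: "sol (0, 0, 0) = 1"
  by (simp add: sol_def ansatz_apply interp_def bump_def damp_def mode_def)

section \<open>The drift\<close>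

lemma drift_identity:
  fixes F a b :: complex
  assumes "(cmod a)\<^sup>2 + (cmod b)\<^sup>2 \<noteq> 0"
  shows "F * cnj a / of_real ((cmod a)\<^sup>2 + (cmod b)\<^sup>2) * a
           + F * cnj b / of_real ((cmod a)\<^sup>2 + (cmod b)\<^sup>2) * b = F"
proof -
  define z :: complex where "z = of_real ((cmod a)\<^sup>2 + (cmod b)\<^sup>2)"
  have "z = a * cnj a + b * cnj b"
    unfolding z_def by (simp flip: complex_norm_square)
  moreover have "z \<noteq> 0"
    unfolding z_def using assms of_real_eq_0_iff by blast
  moreover have "F * cnj a / z * a + F * cnj b / z * b = F * (a * cnj a + b * cnj b) / z"
    by (simp add: algebra_simps add_divide_distrib)
  ultimately show ?thesis by (simp add: z_def)
qed

lemma norm_mult_cnj_div_le: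
  fixes F w :: complex
  assumes "0 < D" "(cmod w)\<^sup>2 \<le> D" "(cmod F)\<^sup>2 \<le> K\<^sup>2 * D" "0 \<le> K"
  shows "cmod (F * cnj w / of_real D) \<le> K"
proof -
  have "(cmod F)\<^sup>2 * (cmod w)\<^sup>2 \<le> (K\<^sup>2 * D) * D"
    by (rule mult_mono[OF assms(3,2)]) (use assms in auto)
  moreover have "(cmod F * cmod w)\<^sup>2 = (cmod F)\<^sup>2 * (cmod w)\<^sup>2" "(K * D)\<^sup>2 = (K\<^sup>2 * D) * D"
    by (simp_all add: power_mult_distrib power2_eq_square)
  ultimately have "(cmod F * cmod w)\<^sup>2 \<le> (K * D)\<^sup>2" by simp
  then have "cmod F * cmod w \<le> K * D"
    by (rule power2_le_imp_le) (use assms in simp)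
  moreover have "cmod (F * cnj w / of_real D) = cmod F * cmod w / D"
    using assms(1) by (simp add: norm_mult norm_divide)
  ultimately show ?thesis
    using assms(1) by (simp add: pos_divide_le_eq)
qed

definition grad_sq :: "real \<times> real \<times> real \<Rightarrow> real" where
  "grad_sq p = (cmod (sol_D1 0 p))\<^sup>2 + (cmod (sol_D1 1 p))\<^sup>2"

definition forcing :: "real \<times> real \<times> real \<Rightarrow> complex" where
  "forcing p = sol_D1 2 p - sol_D2 0 0 p - sol_D2 1 1 p"

definition drift :: "nat \<Rightarrow> real \<times> real \<times> real \<Rightarrow> complex" where
  "drift i p = forcing p * cnj (sol_D1 i p) / of_real (grad_sq p)"

lemma floor_exp_bounds:
  fixes t :: real
  assumes "0 \<le> t"
  shows "1 \<le> \<lfloor>exp t\<rfloor>" "of_int \<lfloor>exp t\<rfloor> \<le> exp t" "exp t < of_int \<lfloor>exp t\<rfloor> + 1"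
proof -
  have "1 \<le> exp t" using assms exp_ge_add_one_self[of t] by linarith
  then show "1 \<le> \<lfloor>exp t\<rfloor>" by linarith
qed linarith+

lemma grad_sq_eq:
  fixes x y t :: real
  defines "s \<equiv> exp t" and "m \<equiv> \<lfloor>exp t\<rfloor>"
  shows "grad_sq (x, y, t) =
    (damp t)\<^sup>2 * ((bump (s - m))\<^sup>2 * (of_int m)\<^sup>2 + (bump (s - m - 1))\<^sup>2 * (of_int m + 1)\<^sup>2)"
proof -
  have D1: "sol_D1 0 (x, y, t) = damp t *\<^sub>R (bump (s - m) *\<^sub>R mode_dx m x y + bump (s - m - 1) *\<^sub>R mode_dx (m + 1) x y)"
    "sol_D1 1 (x, y, t) = damp t *\<^sub>R (bump (s - m) *\<^sub>R mode_dy m x y + bump (s - m - 1) *\<^sub>R mode_dy (m + 1) x y)"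
    unfolding sol_D1_simps by (simp_all add: ansatz_apply interp_def s_def m_def)
  have "\<bar>damp t\<bar> = damp t" using damp_pos[of t] by simp
  moreover have "cmod (complex_of_int m + 1) = \<bar>of_int m + 1\<bar>"
    by (metis norm_of_real of_real_1 of_real_add of_real_of_int_eq)
  ultimately show ?thesis
    unfolding grad_sq_def D1
    by (cases "even m"; simp add: mode_dx_def mode_dy_def norm_mult abs_mult power_mult_distrib;
        simp add: algebra_simps)
qed

lemma grad_sq_ge:
  assumes "0 \<le> t"
  shows "(damp t * of_int \<lfloor>exp t\<rfloor>)\<^sup>2 / 6 \<le> grad_sq (x, y, t)"
proof -
  define s where "s = exp t"
  define m where "m = \<lfloor>exp t\<rfloor>"
  have m: "1 \<le> m" "of_int m \<le> s" "s < of_int m + 1"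
    using floor_exp_bounds[OF assms] unfolding s_def m_def by auto
  have "(of_int m)\<^sup>2 / 6 \<le> (of_int m)\<^sup>2 * ((bump (s - m))\<^sup>2 + (bump (s - m - 1))\<^sup>2)"
    using bump_sq_add_bump_sq_ge[of "s - m"] m by simp
  also have "\<dots> \<le> (bump (s - m))\<^sup>2 * (of_int m)\<^sup>2 + (bump (s - m - 1))\<^sup>2 * (of_int m + 1)\<^sup>2"
    using m mult_left_mono[OF power_mono[of "of_int m" "of_int m + 1" 2], of "(bump (s - m - 1))\<^sup>2"]
    by (simp add: algebra_simps)
  finally have "(damp t)\<^sup>2 * ((of_int m)\<^sup>2 / 6) \<le> (damp t)\<^sup>2 *
      ((bump (s - m))\<^sup>2 * (of_int m)\<^sup>2 + (bump (s - m - 1))\<^sup>2 * (of_int m + 1)\<^sup>2)"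
    by (rule mult_left_mono) simp
  then show ?thesis
    by (simp add: grad_sq_eq s_def m_def power_mult_distrib)
qed

lemma grad_sq_pos: "p \<in> halfspace \<Longrightarrow> 0 < grad_sq p"
proof (cases p)
  case (fields x y t)
  assume "p \<in> halfspace"
  then have t: "0 \<le> t" by (simp add: fields halfspace_def)
  have "0 < damp t * of_int \<lfloor>exp t\<rfloor>"
    using damp_pos[of t] floor_exp_bounds(1)[OF t] by simp
  then have "0 < (damp t * of_int \<lfloor>exp t\<rfloor>)\<^sup>2" by (rule zero_less_power)
  then show ?thesis
    using grad_sq_ge[OF t, of x y] unfolding fields by linarith
qed

lemma forcing_eq:
  fixes x y t :: real
  defines "s \<equiv> exp t" and "m \<equiv> \<lfloor>exp t\<rfloor>"
  shows "forcing (x, y, t) = damp t *\<^sub>R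
     ((bump (s - m) * ((of_int m)\<^sup>2 - s\<^sup>2) + s * bump' (s - m)) *\<^sub>R mode m x y
    + (bump (s - m - 1) * ((of_int m + 1)\<^sup>2 - s\<^sup>2) + s * bump' (s - m - 1)) *\<^sub>R mode (m + 1) x y)"
proof -
  have "forcing (x, y, t) = damp t *\<^sub>R
     ((- s\<^sup>2 * bump (s - m) + s * bump' (s - m)) *\<^sub>R mode m x y
      + (- s\<^sup>2 * bump (s - m - 1) + s * bump' (s - m - 1)) *\<^sub>R mode (m + 1) x y
      - bump (s - m) *\<^sub>R (mode_dxx m x y + mode_dyy m x y)
      - bump (s - m - 1) *\<^sub>R (mode_dxx (m + 1) x y + mode_dyy (m + 1) x y))"
    unfolding forcing_def sol_D1_simps sol_D2_simps ansatz_t_def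
    by (simp add: ansatz_apply interp_def time_coeff_def s_def m_def algebra_simps power2_eq_square)
  then show ?thesis
    unfolding mode_laplacian by (simp add: algebra_simps)
qed

lemma forcing_coeff_le:
  assumes "1 \<le> m" "of_int m \<le> s" "s < of_int m + 1" "k = m \<or> k = m + 1"
  shows "\<bar>bump r * ((of_int k)\<^sup>2 - s\<^sup>2) + s * bump' r\<bar> \<le> 15 * of_int m"
proof -
  have "(of_int m)\<^sup>2 \<le> s\<^sup>2" "s\<^sup>2 \<le> (of_int m + 1)\<^sup>2"
    using assms by (auto intro!: power_mono)
  moreover have "(of_int m + 1)\<^sup>2 = (of_int m)\<^sup>2 + (2 * of_int m + 1 :: real)"
    by (simp add: power2_eq_square algebra_simps)
  ultimately have "\<bar>(of_int k)\<^sup>2 - s\<^sup>2\<bar> \<le> 2 * of_int m + 1"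
    using assms(4) by auto
  then have "\<bar>bump r * ((of_int k)\<^sup>2 - s\<^sup>2)\<bar> \<le> 1 * (2 * of_int m + 1)"
    unfolding abs_mult using abs_bump_le[of r] by (intro mult_mono) auto
  moreover have "\<bar>s * bump' r\<bar> \<le> (of_int m + 1) * 6"
    unfolding abs_mult using abs_bump'_le[of r] assms by (intro mult_mono) auto
  ultimately have "\<bar>bump r * ((of_int k)\<^sup>2 - s\<^sup>2)\<bar> \<le> 2 * of_int m + 1"
    "\<bar>s * bump' r\<bar> \<le> 6 * of_int m + 6"
    by simp_all
  moreover have "1 \<le> real_of_int m" using assms(1) by simp
  ultimately show ?thesis
    using abs_triangle_ineq[of "bump r * ((of_int k)\<^sup>2 - s\<^sup>2)" "s * bump' r"] by linarith
qed

lemma norm_forcing_le: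
  assumes "0 \<le> t"
  shows "cmod (forcing (x, y, t)) \<le> 30 * (damp t * of_int \<lfloor>exp t\<rfloor>)"
proof -
  define s where "s = exp t"
  define m where "m = \<lfloor>exp t\<rfloor>"
  define a where "a = bump (s - m) * ((of_int m)\<^sup>2 - s\<^sup>2) + s * bump' (s - m)"
  define b where "b = bump (s - m - 1) * ((of_int m + 1)\<^sup>2 - s\<^sup>2) + s * bump' (s - m - 1)"
  have m: "1 \<le> m" "of_int m \<le> s" "s < of_int m + 1"
    using floor_exp_bounds[OF assms] unfolding s_def m_def by auto
  have "cmod (forcing (x, y, t)) = damp t * cmod (a *\<^sub>R mode m x y + b *\<^sub>R mode (m + 1) x y)"
    using damp_pos[of t] by (simp add: forcing_eq a_def b_def s_def m_def)
  also have "\<dots> \<le> damp t * (\<bar>a\<bar> + \<bar>b\<bar>)"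
    using damp_pos[of t] norm_triangle_ineq[of "a *\<^sub>R mode m x y" "b *\<^sub>R mode (m + 1) x y"]
    by (intro mult_left_mono) auto
  also have "\<dots> \<le> damp t * (15 * of_int m + 15 * of_int m)"
    using damp_pos[of t] forcing_coeff_le[OF m, of m] forcing_coeff_le[OF m, of "m + 1"]
    unfolding a_def b_def by (intro mult_left_mono add_mono) auto
  finally show ?thesis by (simp add: m_def)
qed

lemma norm_drift_le:
  assumes "p \<in> halfspace" "i \<le> 1"
  shows "cmod (drift i p) \<le> 74"
proof (cases p)
  case (fields x y t)
  then have t: "0 \<le> t" using assms(1) by (simp add: halfspace_def)
  have "(cmod (forcing p))\<^sup>2 \<le> 900 * (damp t * of_int \<lfloor>exp t\<rfloor>)\<^sup>2"
    using power_mono[OF norm_forcing_le[OF t, of x y] norm_ge_zero, of 2]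
    by (simp add: fields power_mult_distrib)
  also have "\<dots> \<le> 74\<^sup>2 * grad_sq p"
    using grad_sq_ge[OF t, of x y] zero_le_power2[of "damp t * of_int \<lfloor>exp t\<rfloor>"]
    by (simp add: fields; linarith)
  finally have "(cmod (forcing p))\<^sup>2 \<le> 74\<^sup>2 * grad_sq p" .
  moreover have "(cmod (sol_D1 i p))\<^sup>2 \<le> grad_sq p"
    using assms(2) by (auto simp: grad_sq_def le_Suc_eq)
  ultimately show ?thesis
    unfolding drift_def using grad_sq_pos[OF assms(1)] by (intro norm_mult_cnj_div_le) auto
qed

lemma drift_bounded_continuous:
  assumes "i \<le> 1"
  shows "bounded_continuous_on_H (drift i)"
proof -
  have cont: "continuous_on halfspace f" if "f \<in> bcontfun" for f :: "real \<times> real \<times> real \<Rightarrow> complex"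
    using that by (auto simp: bcontfun_def intro: continuous_on_subset)
  have "continuous_on halfspace (sol_D1 k)" if "k < 3" for k
    using cont sol_in_bcontfun(2)[OF that] .
  moreover have "continuous_on halfspace (sol_D2 k k)" if "k < 3" for k
    using cont sol_in_bcontfun(3)[OF that that] .
  ultimately have "continuous_on halfspace forcing" "continuous_on halfspace grad_sq"
    and "continuous_on halfspace (sol_D1 i)"
    unfolding forcing_def[abs_def] grad_sq_def[abs_def] using assms
    by (auto intro!: continuous_intros)
  then have "continuous_on halfspace (drift i)"
    unfolding drift_def[abs_def] by (intro continuous_intros) (auto dest!: grad_sq_pos)
  moreover have "bounded (drift i ` halfspace)"
    using norm_drift_le[OF _ assms] by (auto intro!: boundedI)
  ultimately show ?thesis
    unfolding bounded_continuous_on_H_def by blast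
qed

lemma torus_periodic_drift: "torus_periodic (drift i)"
  using torus_periodic_sol(2)[of 0] torus_periodic_sol(2)[of 1] torus_periodic_sol(2)[of 2]
    torus_periodic_sol(2)[of i] torus_periodic_sol(3,4)
  unfolding torus_periodic_def drift_def forcing_def grad_sq_def by simp

lemma sol_equation:
  assumes "p \<in> halfspace"
  shows "sol_D1 2 p = sol_D2 0 0 p + sol_D2 1 1 p + drift 0 p * sol_D1 0 p + drift 1 p * sol_D1 1 p"
proof -
  have "(cmod (sol_D1 0 p))\<^sup>2 + (cmod (sol_D1 1 p))\<^sup>2 \<noteq> 0"
    using grad_sq_pos[OF assms] unfolding grad_sq_def by (metis less_irrefl)
  from drift_identity[OF this, of "forcing p"] show ?thesis
    unfolding drift_def grad_sq_def forcing_def by (simp add: algebra_simps)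
qed

theorem theorem1p3:
  shows "\<exists>(B1 :: real \<times> real \<times> real \<Rightarrow> complex) (B2 :: real \<times> real \<times> real \<Rightarrow> complex)
            (u :: real \<times> real \<times> real \<Rightarrow> complex) D1 D2.
     torus_periodic B1 \<and> torus_periodic B2 \<and> torus_periodic u \<and>
     bounded_continuous_on_H B1 \<and> bounded_continuous_on_H B2 \<and>
     uniformly_C2_with u D1 D2 \<and>
     (\<exists>p \<in> halfspace. u p \<noteq> 0) \<and>
     (\<forall>p \<in> halfspace. D1 2 p = D2 0 0 p + D2 1 1 p + B1 p * D1 0 p + B2 p * D1 1 p) \<and>
     (\<exists>c > 0. \<exists>T0 \<ge> 0. \<forall>T \<ge> T0. \<forall>x y t. t \<ge> T \<longrightarrow>
         cmod (u (x, y, t)) \<le> exp (- c * exp (c * T)))"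
proof (rule exI[of _ "drift 0"], rule exI[of _ "drift 1"], rule exI[of _ sol], rule exI[of _ sol_D1],
    rule exI[of _ sol_D2], intro conjI)
  show "torus_periodic (drift 0)" "torus_periodic (drift 1)" "torus_periodic sol"
    by (rule torus_periodic_drift torus_periodic_sol)+
  show "bounded_continuous_on_H (drift 0)" "bounded_continuous_on_H (drift 1)"
    by (simp_all add: drift_bounded_continuous)
  show "uniformly_C2_with sol sol_D1 sol_D2"
    by (rule sol_uniformly_C2)
  show "\<exists>p\<in>halfspace. sol p \<noteq> 0"
    by (intro bexI[of _ "(0, 0, 0)"]) (simp_all add: sol_origin halfspace_def)
  show "\<forall>p\<in>halfspace. sol_D1 2 p = sol_D2 0 0 p + sol_D2 1 1 p + drift 0 p * sol_D1 0 p + drift 1 p * sol_D1 1 p"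
    using sol_equation by blast
  show "\<exists>c>0. \<exists>T0\<ge>0. \<forall>T\<ge>T0. \<forall>x y t. T \<le> t \<longrightarrow> cmod (sol (x, y, t)) \<le> exp (- c * exp (c * T))"
    by (rule exI[of _ "1::real"], intro conjI exI[of _ "2::real"] allI impI)
       (simp_all add: sol_double_exponential_decay)
qed

end
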